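(* Let $t\in\mathbb{N}$. There exists $n_0(t)$ such that for all $n\ge n_0(t)$, if $\mathcal{F},\mathcal{G}\subseteq\mathcal{M}_{2n-1}$ are $t$-cross-intersecting, then $|\mathcal{F}|\cdot|\mathcal{G}|\le\big((2(n-t)-1)!!\big)^2$.
   Context: $\mathcal{M}_{2n-1}$ is the set of near-perfect matchings of the complete graph $K_{2n-1}$ (matchings with $n-1$ edges). Families $\mathcal{F},\mathcal{G}$ are $t$-cross-intersecting if $|m\cap m'|\ge t$ for all $m\in\mathcal{F}$, $m'\in\mathcal{G}$. $(2k-1)!!=1\cdot3\cdots(2k-1)$. *)

theory Defs
  imports Main
begin

definition edges_of :: "nat set \<Rightarrow> nat set set" where
  "edges_of V = {e. e \<subseteq> V \<and> card e = 2}"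

definition is_matching :: "nat set \<Rightarrow> nat set set \<Rightarrow> bool" where
  "is_matching V m \<longleftrightarrow> m \<subseteq> edges_of V \<and>
     (\<forall>e\<in>m. \<forall>f\<in>m. e \<noteq> f \<longrightarrow> e \<inter> f = {})"

definition near_perfect_matchings :: "nat \<Rightarrow> nat set set set" where
  "near_perfect_matchings n =
     {m. is_matching {0..<2*n-1} m \<and> card m = n - 1}"

definition t_cross_intersecting :: "nat \<Rightarrow> 'a set set \<Rightarrow> 'a set set \<Rightarrow> bool" where
  "t_cross_intersecting t F G \<longleftrightarrow> (\<forall>m\<in>F. \<forall>m'\<in>G. card (m \<inter> m') \<ge> t)"

text \<open>odd_dfact k = (2k-1)!! = 1 * 3 * ... * (2k-1); odd_dfact 0 = 1 = (-1)!!.\<close>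
definition odd_dfact :: "nat \<Rightarrow> nat" where
  "odd_dfact k = (\<Prod>i<k. 2*i+1)"

end

(*
  Spread approximation.  Fix a kernel size q of order (2t+1) log n.  Up to a remainder of at most
  n^q (2(n-q)-1)!! members, a family of near-perfect matchings is covered by the stars
  {m. S <= m} of kernels S with |S| < q, each carrying a subfamily that is n-spread over S.
  Spreadness lets one pick members of two such subfamilies that meet only inside the intersection
  of their kernels, so the kernels of t-cross-intersecting families are t-cross-intersecting.
  If all kernels contain a common t-set T, both families lie essentially in the star of T, which
  has (2(n-t)-1)!! members, and a single member outside that star cuts the other family down to
  about n (2(n-t)-3)!!.  Otherwise branching over the kernels bounds one union of stars by
  q^(t+1) (2(n-t)-3)!! and the other by q^t (2(n-t)-1)!!, and the product stays below
  ((2(n-t)-1)!!)^2 because (2(n-t)-1)!! = (2(n-t)-1) (2(n-t)-3)!! and q is only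
  polylogarithmic in n.
*)

theory Submission
  imports Defs "HOL-Real_Asymp.Real_Asymp"
begin

section \<open>Matchings of a complete graph\<close>

definition matchings :: "nat set \<Rightarrow> nat \<Rightarrow> nat set set set" where
  "matchings W k = {m. is_matching W m \<and> card m = k}"

lemma near_perfect_matchings_eq: "near_perfect_matchings n = matchings {0..<2*n-1} (n - 1)"
  by (simp add: near_perfect_matchings_def matchings_def)

lemma odd_dfact_Suc: "odd_dfact (Suc k) = (2*k + 1) * odd_dfact k"
  by (simp add: odd_dfact_def)

lemma finite_edges_of: "finite V \<Longrightarrow> finite (edges_of V)"
  unfolding edges_of_def by (rule finite_subset[of _ "Pow V"]) auto

lemma is_matching_edgeD: "is_matching V m \<Longrightarrow> e \<in> m \<Longrightarrow> e \<subseteq> V \<and> card e = 2"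
  unfolding is_matching_def edges_of_def by auto

lemma is_matching_disjoint: "is_matching V m \<Longrightarrow> e \<in> m \<Longrightarrow> f \<in> m \<Longrightarrow> e \<noteq> f \<Longrightarrow> e \<inter> f = {}"
  unfolding is_matching_def by auto

lemma finite_matching: "is_matching V m \<Longrightarrow> finite V \<Longrightarrow> finite m"
  unfolding is_matching_def using finite_edges_of finite_subset by blast

lemma finite_matchings: "finite W \<Longrightarrow> finite (matchings W k)"
  unfolding matchings_def is_matching_def
  by (rule finite_subset[of _ "Pow (edges_of W)"]) (auto simp: finite_edges_of)

lemma is_matching_subset: "is_matching V m \<Longrightarrow> m' \<subseteq> m \<Longrightarrow> is_matching V m'"
  unfolding is_matching_def by blast

lemma is_matching_vertices_mono: "is_matching V m \<Longrightarrow> \<Union>m \<subseteq> V' \<Longrightarrow> is_matching V' m"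
  unfolding is_matching_def edges_of_def by blast

lemma is_matching_Diff_Union: "is_matching V m \<Longrightarrow> S \<subseteq> m \<Longrightarrow> is_matching (V - \<Union>S) (m - S)"
  by (rule is_matching_vertices_mono[OF is_matching_subset])
     (auto dest: is_matching_edgeD is_matching_disjoint)

lemma card_Union_matching:
  assumes "is_matching V m" "finite V"
  shows "card (\<Union>m) = 2 * card m"
proof -
  have "card (\<Union>m) = (\<Sum>e\<in>m. card e)"
    using assms is_matching_edgeD is_matching_disjoint
    by (intro card_Union_disjoint) (auto simp: pairwise_def disjnt_def intro: card_ge_0_finite)
  also have "\<dots> = (\<Sum>e\<in>m. 2)"
    using assms(1) by (intro sum.cong) (auto dest: is_matching_edgeD)
  finally show ?thesis by simp
qed

lemma matchings_Suc_subset: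
  assumes W: "finite W" and v: "v \<in> W"
  shows "matchings W (Suc k) \<subseteq>
           matchings (W - {v}) (Suc k) \<union> (\<Union>u\<in>W - {v}. insert {v,u} ` matchings (W - {v,u}) k)"
proof
  fix m assume "m \<in> matchings W (Suc k)"
  then have m: "is_matching W m" and card_m: "card m = Suc k"
    by (auto simp: matchings_def)
  show "m \<in> matchings (W - {v}) (Suc k) \<union> (\<Union>u\<in>W - {v}. insert {v,u} ` matchings (W - {v,u}) k)"
  proof (cases "v \<in> \<Union>m")
    case False
    then have "is_matching (W - {v}) m"
      using m by (intro is_matching_vertices_mono[OF m]) (auto dest: is_matching_edgeD)
    then show ?thesis using card_m by (simp add: matchings_def)
  next
    case True
    then obtain e where e: "e \<in> m" "v \<in> e" by blast
    with m obtain u where e_eq: "e = {v,u}" and u: "u \<in> W - {v}"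
      by (auto dest!: is_matching_edgeD simp: card_2_iff doubleton_eq_iff)
    have "is_matching (W - {v,u}) (m - {e})"
      using is_matching_Diff_Union[OF m, of "{e}"] e e_eq by simp
    moreover have "card (m - {e}) = k"
      using card_m e finite_matching[OF m W] by simp
    moreover have "m = insert {v,u} (m - {e})"
      using e e_eq by auto
    ultimately show ?thesis
      using u by (auto simp: matchings_def)
  qed
qed

lemma card_matchings_Suc_le:
  assumes W: "finite W" and v: "v \<in> W"
  shows "card (matchings W (Suc k)) \<le>
           card (matchings (W - {v}) (Suc k)) + (\<Sum>u\<in>W - {v}. card (matchings (W - {v,u}) k))"
proof -
  let ?B = "\<Union>u\<in>W - {v}. insert {v,u} ` matchings (W - {v,u}) k"
  have "card (matchings W (Suc k)) \<le> card (matchings (W - {v}) (Suc k) \<union> ?B)"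
    using matchings_Suc_subset[OF W v, of k] W by (intro card_mono) (simp_all add: finite_matchings)
  also have "\<dots> \<le> card (matchings (W - {v}) (Suc k)) + card ?B"
    by (rule card_Un_le)
  also have "card ?B \<le> (\<Sum>u\<in>W - {v}. card (insert {v,u} ` matchings (W - {v,u}) k))"
    by (rule card_UN_le) (simp add: W)
  also have "\<dots> \<le> (\<Sum>u\<in>W - {v}. card (matchings (W - {v,u}) k))"
    using W by (intro sum_mono card_image_le) (simp add: finite_matchings)
  finally show ?thesis
    by simp
qed

lemma choose_odd_dfact_recurrence:
  "(w choose (2*k+2)) * odd_dfact (Suc k) + w * ((w - 1) choose (2*k)) * odd_dfact k
     = (Suc w choose (2*k+2)) * odd_dfact (Suc k)"
proof -
  have "w * ((w - 1) choose (2*k)) = (w choose (2*k+1)) * (2*k+1)"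
    using Suc_times_binomial_eq[of "w - 1" "2*k"] by (cases w) simp_all
  then have "w * ((w - 1) choose (2*k)) * odd_dfact k = (w choose (2*k+1)) * odd_dfact (Suc k)"
    by (metis odd_dfact_Suc mult.assoc)
  then show ?thesis
    by (simp add: algebra_simps numeral_2_eq_2)
qed

lemma card_matchings_le:
  "finite W \<Longrightarrow> card (matchings W k) \<le> (card W choose (2*k)) * odd_dfact k"
proof (induction "card W" arbitrary: W k rule: less_induct)
  case less
  show ?case
  proof (cases k)
    case 0
    have "matchings W 0 \<subseteq> {{}}"
      by (auto simp: matchings_def dest: finite_matching[OF _ less.prems])
    then have "card (matchings W 0) \<le> 1"
      using card_mono[of "{{}}" "matchings W 0"] by simp
    then show ?thesis
      using 0 by (simp add: odd_dfact_def)
  next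
    case (Suc k')
    show ?thesis
    proof (cases "W = {}")
      case True
      then have "edges_of W = {}"
        by (auto simp: edges_of_def)
      then have "matchings W k = {}"
        using Suc by (auto simp: matchings_def is_matching_def)
      then show ?thesis by simp
    next
      case False
      then obtain v where v: "v \<in> W" by blast
      define w where "w = card W - 1"
      have card_W: "card W = Suc w"
        unfolding w_def using v less.prems by (metis Suc_diff_1 card_gt_0_iff empty_iff)
      have IH: "card (matchings W' j) \<le> (card W' choose (2*j)) * odd_dfact j"
        if "W' \<subseteq> W - {v}" for W' j
      proof (rule less.hyps)
        show "finite W'"
          using finite_subset[OF that] less.prems by simp
        show "card W' < card W"
          using card_mono[OF _ that] card_Diff1_less[OF less.prems v] less.prems by simp
      qed
      have "(\<Sum>u\<in>W - {v}. card (matchings (W - {v,u}) k'))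
              \<le> (\<Sum>u\<in>W - {v}. ((w - 1) choose (2*k')) * odd_dfact k')"
      proof (rule sum_mono)
        fix u assume "u \<in> W - {v}"
        then have "card (W - {v,u}) = w - 1"
          using less.prems card_W v by (simp add: card_Diff_subset)
        then show "card (matchings (W - {v,u}) k') \<le> ((w - 1) choose (2*k')) * odd_dfact k'"
          using IH[of "W - {v,u}" k'] by auto
      qed
      moreover have "card (matchings (W - {v}) (Suc k')) \<le> (w choose (2*k'+2)) * odd_dfact (Suc k')"
        using IH[of "W - {v}" "Suc k'"] less.prems v card_W by simp
      ultimately have "card (matchings W (Suc k')) \<le> (w choose (2*k'+2)) * odd_dfact (Suc k')
          + (\<Sum>u\<in>W - {v}. ((w - 1) choose (2*k')) * odd_dfact k')"
        using card_matchings_Suc_le[OF less.prems v, of k'] by linarith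
      also have "(\<Sum>u\<in>W - {v}. ((w - 1) choose (2*k')) * odd_dfact k')
          = w * ((w - 1) choose (2*k')) * odd_dfact k'"
        using v less.prems card_W by (simp add: mult.assoc)
      finally have "card (matchings W (Suc k')) \<le>
          (w choose (2*k'+2)) * odd_dfact (Suc k') + w * ((w - 1) choose (2*k')) * odd_dfact k'" .
      then show ?thesis
        unfolding choose_odd_dfact_recurrence card_W Suc by simp
    qed
  qed
qed

section \<open>Stars\<close>

definition star :: "nat \<Rightarrow> nat set set \<Rightarrow> nat set set set" where
  "star n S = {m \<in> near_perfect_matchings n. S \<subseteq> m}"

lemma finite_near_perfect_matchings: "finite (near_perfect_matchings n)"
  by (simp add: near_perfect_matchings_eq finite_matchings)

lemma near_perfect_matchingsD:
  "m \<in> near_perfect_matchings n \<Longrightarrow> finite m \<and> card m = n - 1"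
  by (auto simp: near_perfect_matchings_def intro: finite_matching)

lemma finite_star: "finite (star n S)"
  unfolding star_def using finite_near_perfect_matchings by simp

lemma star_antimono: "S \<subseteq> S' \<Longrightarrow> star n S' \<subseteq> star n S"
  unfolding star_def by auto

(* Removing S leaves a matching with n - 1 - |S| edges on the 2(n - |S|) - 1 uncovered vertices. *)
lemma card_star_le:
  assumes "0 < n"
  shows "card (star n S) \<le> odd_dfact (n - card S)"
proof (cases "star n S = {}")
  case False
  then obtain m0 where m0: "m0 \<in> near_perfect_matchings n" "S \<subseteq> m0"
    by (auto simp: star_def)
  define V where "V = {0..<2*n-1}"
  define c where "c = n - 1 - card S"
  have S: "is_matching V S"
    using m0 is_matching_subset by (auto simp: near_perfect_matchings_def V_def)
  have finite_S: "finite S"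
    using m0 near_perfect_matchingsD finite_subset by blast
  have "card S \<le> n - 1"
    using card_mono[OF _ m0(2)] near_perfect_matchingsD[OF m0(1)] by simp
  moreover have "\<Union>S \<subseteq> V"
    using S by (auto dest: is_matching_edgeD)
  ultimately have card_W: "card (V - \<Union>S) = 2*c + 1"
    using card_Union_matching[OF S] assms by (simp add: card_Diff_subset finite_subset V_def c_def)
  have "(\<lambda>m. m - S) ` star n S \<subseteq> matchings (V - \<Union>S) c"
  proof clarify
    fix m assume "m \<in> star n S"
    then have m: "is_matching V m" "card m = n - 1" "S \<subseteq> m" "finite m"
      by (auto simp: star_def near_perfect_matchings_def V_def intro: finite_matching)
    then show "m - S \<in> matchings (V - \<Union>S) c"
      using is_matching_Diff_Union[OF m(1,3)] card_Diff_subset[OF finite_S m(3)]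
      by (simp add: matchings_def c_def)
  qed
  moreover have "inj_on (\<lambda>m. m - S) (star n S)"
    by (auto simp: inj_on_def star_def)
  ultimately have "card (star n S) \<le> card (matchings (V - \<Union>S) c)"
    by (metis card_image card_mono finite_matchings finite_Diff V_def finite_atLeastLessThan)
  also have "\<dots> \<le> (2*c + 1) * odd_dfact c"
    using card_matchings_le[of "V - \<Union>S" c] card_W by (simp add: V_def binomial_Suc_n)
  also have "\<dots> = odd_dfact (Suc c)"
    by (simp add: odd_dfact_Suc)
  also have "Suc c = n - card S"
    using \<open>card S \<le> n - 1\<close> assms by (simp add: c_def)
  finally show ?thesis .
qed simp

lemma card_supersets_le:
  assumes "0 < n" "F \<subseteq> near_perfect_matchings n"
  shows "card {f\<in>F. S \<subseteq> f} \<le> odd_dfact (n - card S)"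
proof -
  have "{f\<in>F. S \<subseteq> f} \<subseteq> star n S"
    using assms(2) by (auto simp: star_def)
  then have "card {f\<in>F. S \<subseteq> f} \<le> card (star n S)"
    by (rule card_mono[OF finite_star])
  also have "\<dots> \<le> odd_dfact (n - card S)"
    by (rule card_star_le[OF assms(1)])
  finally show ?thesis .
qed

lemma card_Union_stars_le:
  assumes "0 < n" "finite \<T>" "\<And>T. T \<in> \<T> \<Longrightarrow> card T = s"
  shows "card (\<Union>T\<in>\<T>. star n T) \<le> card \<T> * odd_dfact (n - s)"
proof -
  have "card (\<Union>T\<in>\<T>. star n T) \<le> (\<Sum>T\<in>\<T>. card (star n T))"
    using assms(2) by (rule card_UN_le)
  also have "\<dots> \<le> (\<Sum>T\<in>\<T>. odd_dfact (n - s))"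
    using card_star_le[OF assms(1)] assms(3) by (intro sum_mono) fastforce
  finally show ?thesis by simp
qed

lemma card_t_intersecting_le:
  assumes "0 < n" and F: "F \<subseteq> near_perfect_matchings n" and g: "g \<in> near_perfect_matchings n"
    and t: "\<And>f. f \<in> F \<Longrightarrow> t \<le> card (f \<inter> g)"
  shows "card F \<le> n^t * odd_dfact (n - t)"
proof -
  define \<T> where "\<T> = {T. T \<subseteq> g \<and> card T = t}"
  have g': "finite g" "card g = n - 1"
    using near_perfect_matchingsD[OF g] by auto
  have "F \<subseteq> (\<Union>T\<in>\<T>. star n T)"
  proof
    fix f assume f: "f \<in> F"
    obtain T where "T \<subseteq> f \<inter> g" "card T = t"
      using obtain_subset_with_card_n[OF t[OF f]] by metis
    then show "f \<in> (\<Union>T\<in>\<T>. star n T)"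
      using f F by (auto simp: \<T>_def star_def)
  qed
  then have "card F \<le> card (\<Union>T\<in>\<T>. star n T)"
    by (intro card_mono finite_subset[OF _ finite_near_perfect_matchings]) (auto simp: star_def)
  also have "\<dots> \<le> card \<T> * odd_dfact (n - t)"
    using g' by (intro card_Union_stars_le assms(1)) (auto simp: \<T>_def)
  also have "card \<T> = (n - 1) choose t"
    using n_subsets[OF g'(1)] g' by (simp add: \<T>_def)
  also have "(n - 1) choose t \<le> n^t"
  proof (cases "t \<le> n - 1")
    case True
    then have "(n - 1) choose t \<le> (n - 1)^t"
      by (rule binomial_le_pow)
    also have "\<dots> \<le> n^t"
      by (simp add: power_mono)
    finally show ?thesis .
  qed (simp add: binomial_eq_0)
  finally show ?thesis
    by (simp add: mult_right_mono)
qed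

lemma card_Int_star_le:
  assumes "0 < n" and f: "f \<in> near_perfect_matchings n" and T: "\<not> T \<subseteq> f" "finite T" "card T = t"
    and t: "\<And>g. g \<in> G \<Longrightarrow> t \<le> card (f \<inter> g)"
  shows "card (G \<inter> star n T) \<le> (n - 1) * odd_dfact (n - Suc t)"
proof -
  have f': "finite f" "card f = n - 1"
    using near_perfect_matchingsD[OF f] by auto
  have "G \<inter> star n T \<subseteq> (\<Union>e\<in>f - T. star n (insert e T))"
  proof
    fix g assume g: "g \<in> G \<inter> star n T"
    have "\<exists>e\<in>f - T. e \<in> g"
    proof (rule ccontr)
      assume "\<not> ?thesis"
      then have "f \<inter> g \<subset> T"
        using g T(1) by (auto simp: star_def)
      then have "card (f \<inter> g) < t"
        using psubset_card_mono[OF T(2)] T(3) by simp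
      then show False
        using t[of g] g by simp
    qed
    then show "g \<in> (\<Union>e\<in>f - T. star n (insert e T))"
      using g by (auto simp: star_def)
  qed
  then have "card (G \<inter> star n T) \<le> card (\<Union>T'\<in>(\<lambda>e. insert e T) ` (f - T). star n T')"
    by (intro card_mono) (auto simp: finite_star f')
  also have "\<dots> \<le> card ((\<lambda>e. insert e T) ` (f - T)) * odd_dfact (n - Suc t)"
    using T by (intro card_Union_stars_le assms(1)) (auto simp: f')
  also have "card ((\<lambda>e. insert e T) ` (f - T)) \<le> n - 1"
    using card_image_le[of "f - T" "\<lambda>e. insert e T"] card_mono[of f "f - T"] f' by simp
  finally show ?thesis
    by (simp add: mult_right_mono)
qed

section \<open>Spread approximation\<close>

lemma t_cross_intersecting_commute:
  "t_cross_intersecting t F G \<longleftrightarrow> t_cross_intersecting t G F"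
  unfolding t_cross_intersecting_def by (metis Int_commute)

lemma t_cross_intersecting_subset:
  "t_cross_intersecting t F G \<Longrightarrow> F' \<subseteq> F \<Longrightarrow> G' \<subseteq> G \<Longrightarrow> t_cross_intersecting t F' G'"
  by (auto simp: t_cross_intersecting_def)

(* Only elements outside S are tested: a weak form of r-spreadness of {h - S | h \<in> H}, which is
   all that the avoidance argument needs. *)
definition spread_over :: "nat \<Rightarrow> 'a set \<Rightarrow> 'a set set \<Rightarrow> bool" where
  "spread_over r S H \<longleftrightarrow> finite H \<and> H \<noteq> {} \<and> (\<forall>h\<in>H. S \<subseteq> h) \<and>
     (\<forall>e. e \<notin> S \<longrightarrow> r * card {h\<in>H. e \<in> h} \<le> card H)"

lemma spread_over_avoids:
  assumes H: "spread_over r S H" and D: "finite D" "card D < r" "D \<inter> S = {}"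
  shows "\<exists>h\<in>H. D \<inter> h = {}"
proof -
  let ?bad = "\<Union>e\<in>D. {h\<in>H. e \<in> h}"
  have H': "finite H" "H \<noteq> {}" "\<And>e. e \<in> D \<Longrightarrow> r * card {h\<in>H. e \<in> h} \<le> card H"
    using H D(3) by (auto simp: spread_over_def)
  have "r * card ?bad \<le> r * (\<Sum>e\<in>D. card {h\<in>H. e \<in> h})"
    using D(1) by (simp add: card_UN_le)
  also have "\<dots> = (\<Sum>e\<in>D. r * card {h\<in>H. e \<in> h})"
    by (simp add: sum_distrib_left)
  also have "\<dots> \<le> card D * card H"
    using sum_mono[of D _ "\<lambda>_. card H"] H'(3) by simp
  also have "\<dots> < r * card H"
    using D(2) H'(1,2) by (simp add: card_gt_0_iff)
  finally have "card ?bad < card H"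
    by (rule mult_left_less_imp_less) simp
  moreover have "finite ?bad"
    using D(1) H'(1) by auto
  ultimately have "\<not> H \<subseteq> ?bad"
    using card_mono by fastforce
  then show ?thesis
    by auto
qed

lemma spread_kernels_intersect:
  assumes H1: "spread_over r S1 H1" and H2: "spread_over r S2 H2"
    and small: "\<And>h. h \<in> H1 \<Longrightarrow> finite h \<and> card h < r"
    and S2: "finite S2" "card (S2 - S1) < r"
    and cross: "t_cross_intersecting t H1 H2"
  shows "t \<le> card (S1 \<inter> S2)"
proof -
  obtain h1 where h1: "h1 \<in> H1" "(S2 - S1) \<inter> h1 = {}"
    using spread_over_avoids[OF H1, of "S2 - S1"] S2 by auto
  have "card (h1 - S2) < r"
    using small[OF h1(1)] card_mono[of h1 "h1 - S2"] by simp
  then obtain h2 where h2: "h2 \<in> H2" "(h1 - S2) \<inter> h2 = {}"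
    using spread_over_avoids[OF H2, of "h1 - S2"] small[OF h1(1)] by auto
  have "h1 \<inter> h2 \<subseteq> S1 \<inter> S2"
    using h1(2) h2(2) by blast
  then have "card (h1 \<inter> h2) \<le> card (S1 \<inter> S2)"
    using S2(1) by (simp add: card_mono)
  moreover have "t \<le> card (h1 \<inter> h2)"
    using cross h1(1) h2(1) by (auto simp: t_cross_intersecting_def)
  ultimately show ?thesis by simp
qed

lemma spread_over_if_maximal_weight:
  fixes F :: "'a set set"
  assumes F: "finite F" "\<And>f. f \<in> F \<Longrightarrow> f \<subseteq> E" and r: "0 < r"
    and S: "S \<subseteq> E" "finite S" "card S < q" "\<exists>f\<in>F. S \<subseteq> f"
    and max: "\<And>S'. S' \<subseteq> E \<Longrightarrow> card S' \<le> q \<Longrightarrow>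
                r ^ card S' * card {f\<in>F. S' \<subseteq> f} \<le> r ^ card S * card {f\<in>F. S \<subseteq> f}"
  shows "spread_over r S {f\<in>F. S \<subseteq> f}"
  unfolding spread_over_def
proof (intro conjI allI impI)
  show "finite {f\<in>F. S \<subseteq> f}" "{f\<in>F. S \<subseteq> f} \<noteq> {}" "\<forall>h\<in>{f\<in>F. S \<subseteq> f}. S \<subseteq> h"
    using F(1) S(4) by auto
next
  fix e assume e: "e \<notin> S"
  show "r * card {h\<in>{f\<in>F. S \<subseteq> f}. e \<in> h} \<le> card {f\<in>F. S \<subseteq> f}"
  proof (cases "e \<in> E")
    case True
    have eq: "{h\<in>{f\<in>F. S \<subseteq> f}. e \<in> h} = {f\<in>F. insert e S \<subseteq> f}"
      by auto
    have "r ^ card (insert e S) * card {f\<in>F. insert e S \<subseteq> f} \<le> r ^ card S * card {f\<in>F. S \<subseteq> f}"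
      using True S e by (intro max) auto
    then have "r ^ card S * (r * card {f\<in>F. insert e S \<subseteq> f}) \<le> r ^ card S * card {f\<in>F. S \<subseteq> f}"
      using e S(2) by (simp add: mult.assoc)
    then show ?thesis
      unfolding eq using r by simp
  next
    case False
    then have "{h\<in>{f\<in>F. S \<subseteq> f}. e \<in> h} = {}"
      using F(2) by blast
    then show ?thesis
      by (simp only: card.empty)
  qed
qed

lemma spread_approximation_step:
  fixes F :: "'a set set"
  assumes E: "finite E" "\<And>f. f \<in> F \<Longrightarrow> f \<subseteq> E" and r: "0 < r" and "F \<noteq> {}"
    and b: "\<And>S. S \<subseteq> E \<Longrightarrow> card S = q \<Longrightarrow> card {f\<in>F. S \<subseteq> f} \<le> b"
  shows "card F \<le> r^q * b \<or> (\<exists>S H. finite S \<and> card S < q \<and> H \<subseteq> F \<and> spread_over r S H)"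
proof -
  define w where "w S = r ^ card S * card {f\<in>F. S \<subseteq> f}" for S
  define C where "C = {S. S \<subseteq> E \<and> card S \<le> q}"
  have "finite C" "{} \<in> C"
    using E(1) by (auto simp: C_def)
  then obtain S where S: "S \<in> C" and S_max: "\<And>S'. S' \<in> C \<Longrightarrow> w S' \<le> w S"
    using Max_in[of "w ` C"] Max_ge[of "w ` C"] by (metis empty_iff finite_imageI image_iff)
  have "finite F"
    using E finite_subset[of F "Pow E"] by blast
  have finite_S: "finite S"
    using S E(1) finite_subset by (auto simp: C_def)
  have F_le: "card F \<le> r ^ card S * card {f\<in>F. S \<subseteq> f}"
    using S_max[OF \<open>{} \<in> C\<close>] by (simp add: w_def)
  have "{f\<in>F. S \<subseteq> f} \<noteq> {}"
  proof
    assume "{f\<in>F. S \<subseteq> f} = {}"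
    then have "card F \<le> 0"
      using F_le by (simp only: card.empty mult_0_right)
    then show False
      using \<open>F \<noteq> {}\<close> \<open>finite F\<close> by simp
  qed
  then have "\<exists>f\<in>F. S \<subseteq> f"
    by blast
  show ?thesis
  proof (cases "card S = q")
    case True
    then have "card {f\<in>F. S \<subseteq> f} \<le> b"
      using b S by (simp add: C_def)
    then have "card F \<le> r^q * b"
      using F_le True by (meson mult_le_mono2 order_trans)
    then show ?thesis ..
  next
    case False
    have "S \<subseteq> E" "card S < q"
      using S False by (auto simp: C_def)
    moreover have "r ^ card S' * card {f\<in>F. S' \<subseteq> f} \<le> r ^ card S * card {f\<in>F. S \<subseteq> f}"
      if "S' \<subseteq> E" "card S' \<le> q" for S'
      using S_max[of S'] that by (simp add: C_def w_def)
    ultimately have "spread_over r S {f\<in>F. S \<subseteq> f}"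
      using \<open>\<exists>f\<in>F. S \<subseteq> f\<close> finite_S
      by (intro spread_over_if_maximal_weight[OF \<open>finite F\<close> E(2) r])
    then show ?thesis
      using finite_S False S by (auto simp: C_def)
  qed
qed

(* Peel off the members containing a set S that maximises r^|S| |{f \<in> F. S \<subseteq> f}| among
   |S| \<le> q; the members still present when the maximiser has size q form the remainder R. *)
lemma spread_approximation:
  fixes F :: "'a set set" and E :: "'a set"
  assumes E: "finite E" "\<And>f. f \<in> F \<Longrightarrow> f \<subseteq> E" and r: "0 < r"
    and b: "\<And>S. S \<subseteq> E \<Longrightarrow> card S = q \<Longrightarrow> card {f\<in>F. S \<subseteq> f} \<le> b"
  shows "\<exists>K R. R \<subseteq> F \<and> card R \<le> r^q * b \<and> (\<forall>f\<in>F - R. \<exists>S\<in>K. S \<subseteq> f) \<and>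
           (\<forall>S\<in>K. finite S \<and> card S < q \<and> (\<exists>H\<subseteq>F. spread_over r S H))"
  using E(2) b
proof (induction "card F" arbitrary: F rule: less_induct)
  case less
  show ?case
  proof (cases "F = {}")
    case True
    then show ?thesis
      by (intro exI[of _ "{}"]) simp
  next
    case False
    from spread_approximation_step[OF E(1) less.prems(1) r False less.prems(2)]
    consider "card F \<le> r^q * b" | S H where "finite S" "card S < q" "H \<subseteq> F" "spread_over r S H"
      by blast
    then show ?thesis
    proof cases
      case 1
      then show ?thesis
        by (intro exI[of _ "{}"] exI[of _ F]) simp
    next
      case (2 S H)
      then have "F - H \<subset> F" "finite F"
        using E finite_subset[of F "Pow E"] less.prems(1) by (auto simp: spread_over_def)
      then have "card (F - H) < card F"
        by (simp add: psubset_card_mono)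
      moreover have "card {f\<in>F - H. S' \<subseteq> f} \<le> b" if "S' \<subseteq> E" "card S' = q" for S'
        by (intro order_trans[OF card_mono less.prems(2)[OF that]]) (auto simp: \<open>finite F\<close>)
      ultimately obtain K R where K:
        "R \<subseteq> F - H" "card R \<le> r^q * b" "\<forall>f\<in>F - H - R. \<exists>S\<in>K. S \<subseteq> f"
        "\<forall>S\<in>K. finite S \<and> card S < q \<and> (\<exists>H'\<subseteq>F - H. spread_over r S H')"
        using less.hyps[of "F - H"] less.prems(1) by blast
      have "\<forall>f\<in>F - R. \<exists>S'\<in>insert S K. S' \<subseteq> f"
        using K(3) 2(4) by (auto simp: spread_over_def)
      moreover have "\<forall>S'\<in>K. finite S' \<and> card S' < q \<and> (\<exists>H'\<subseteq>F. spread_over r S' H')"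
        using K(4) by blast
      moreover have "finite S \<and> card S < q \<and> (\<exists>H'\<subseteq>F. spread_over r S H')"
        using 2 by blast
      ultimately show ?thesis
        using K(1,2) by (intro exI[of _ "insert S K"] exI[of _ R]) auto
    qed
  qed
qed

section \<open>Branching over cross-intersecting kernels\<close>

lemma Union_above_subset_branches:
  assumes cross: "t_cross_intersecting t AA BB" and B: "B \<in> BB" "card (X \<inter> B) < t"
    and "finite X"
  shows "(\<Union>A\<in>{A\<in>AA. X \<subseteq> A}. st A) \<subseteq> (\<Union>e\<in>B - X. \<Union>A\<in>{A\<in>AA. insert e X \<subseteq> A}. st A)"
proof clarify
  fix z A assume A: "A \<in> AA" "X \<subseteq> A" "z \<in> st A"
  have "\<not> A \<inter> B \<subseteq> X \<inter> B"
  proof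
    assume "A \<inter> B \<subseteq> X \<inter> B"
    then have "card (A \<inter> B) \<le> card (X \<inter> B)"
      using \<open>finite X\<close> by (simp add: card_mono)
    then show False
      using cross A(1) B by (fastforce simp: t_cross_intersecting_def)
  qed
  then obtain e where e: "e \<in> B - X" "e \<in> A"
    by blast
  then have "A \<in> {A\<in>AA. insert e X \<subseteq> A}"
    using A by simp
  then have "z \<in> (\<Union>A\<in>{A\<in>AA. insert e X \<subseteq> A}. st A)"
    using A(3) by (rule UN_I)
  with e(1) show "z \<in> (\<Union>e\<in>B - X. \<Union>A\<in>{A\<in>AA. insert e X \<subseteq> A}. st A)"
    by (rule UN_I)
qed

(* While |X| < m some B \<in> BB meets X in fewer than t elements, and then every A \<supseteq> X in AA
   contains one of the at most q elements of B - X: branching on it increases |X| by one. *)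
lemma card_Union_above_le:
  fixes st :: "'a set \<Rightarrow> 'b set" and a :: "nat \<Rightarrow> nat"
  assumes st_antimono: "\<And>X Y. X \<subseteq> Y \<Longrightarrow> st Y \<subseteq> st X"
    and finite_st: "\<And>X. finite (st X)" and card_st: "\<And>X. card (st X) \<le> a (card X)"
    and AA: "\<And>A. A \<in> AA \<Longrightarrow> finite A"
    and BB: "\<And>B. B \<in> BB \<Longrightarrow> finite B \<and> card B \<le> q"
    and cross: "t_cross_intersecting t AA BB"
    and blocked: "\<And>Y A. X \<subseteq> Y \<Longrightarrow> card Y < m \<Longrightarrow> A \<in> AA \<Longrightarrow> Y \<subseteq> A \<Longrightarrow> \<exists>B\<in>BB. card (Y \<inter> B) < t"
    and "card X \<le> m"
  shows "card (\<Union>A\<in>{A\<in>AA. X \<subseteq> A}. st A) \<le> q ^ (m - card X) * a m"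
  using blocked \<open>card X \<le> m\<close>
proof (induction "m - card X" arbitrary: X rule: less_induct)
  case less
  let ?above = "\<lambda>X. \<Union>A\<in>{A\<in>AA. X \<subseteq> A}. st A"
  have finite_above: "finite (?above Y)" for Y
    using finite_subset[OF _ finite_st[of "{}"]] st_antimono[of "{}"] by blast
  show ?case
  proof (cases "\<exists>A\<in>AA. X \<subseteq> A")
    case False
    then have "?above X = {}" by blast
    then show ?thesis by (metis card.empty le0)
  next
    case True
    then obtain A where A: "A \<in> AA" "X \<subseteq> A" by blast
    then have finite_X: "finite X"
      using AA finite_subset by blast
    show ?thesis
    proof (cases "card X = m")
      case True
      have "card (?above X) \<le> card (st X)"
        using st_antimono by (intro card_mono finite_st) blast
      then show ?thesis
        using card_st[of X] True by simp
    next
      case False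
      then have "card X < m"
        using less.prems(2) by simp
      then obtain B where B: "B \<in> BB" "card (X \<inter> B) < t"
        using less.prems(1)[OF order_refl _ A] by blast
      have "finite (B - X)"
        using BB[OF B(1)] by simp
      with Union_above_subset_branches[OF cross B finite_X]
      have "card (?above X) \<le> (\<Sum>e\<in>B - X. card (?above (insert e X)))"
        by (intro order_trans[OF card_mono card_UN_le] finite_UN_I finite_above)
      also have "\<dots> \<le> (\<Sum>e\<in>B - X. q ^ (m - Suc (card X)) * a m)"
      proof (rule sum_mono)
        fix e assume "e \<in> B - X"
        then have "card (insert e X) = Suc (card X)"
          using finite_X by simp
        then show "card (?above (insert e X)) \<le> q ^ (m - Suc (card X)) * a m"
          using less.hyps[of "insert e X"] less.prems(1) \<open>card X < m\<close> by simp
      qed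
      also have "\<dots> \<le> q * (q ^ (m - Suc (card X)) * a m)"
        using BB[OF B(1)] card_mono[of B "B - X"] by (simp add: mult_right_mono)
      also have "\<dots> = q ^ (m - card X) * a m"
        using \<open>card X < m\<close> by (simp add: Suc_diff_Suc power_Suc[symmetric])
      finally show ?thesis .
    qed
  qed
qed

section \<open>Admissible kernel sizes\<close>

lemma double_mult_le_square:
  fixes N t :: nat
  assumes "t + 2 \<le> N"
  shows "2 * N * (N + t) \<le> (2 * N - 1)^2"
proof -
  define M where "M = N - 1"
  have M: "N = Suc M" "t + 1 \<le> M"
    using assms by (auto simp: M_def)
  have "M * (t + 1) \<le> M * M"
    using M(2) by (rule mult_le_mono2)
  then show ?thesis
    using M by (simp add: power2_eq_square algebra_simps)
qed

(* The remainder n^q (2(n-q)-1)!! of the spread approximation is at most (2(n-t)-3)!! / n^t, and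
   the branching factors fit into (2(n-t)-1)!! = (2(n-t)-1) (2(n-t)-3)!!. *)
locale admissible_kernel_size =
  fixes n q t :: nat
  assumes t_less_q: "t < q"
    and n_large: "4 * q + 2 \<le> n"
    and remainder_small: "n^t * (n^q * odd_dfact (n - q)) \<le> odd_dfact (n - Suc t)"
    and branching_small: "(q^(t+1) + 1) * (q^t + 1) \<le> 2 * (n - t) - 1"
begin

lemma n_pos: "0 < n"
  using n_large by simp

lemma odd_dfact_n_minus_t: "odd_dfact (n - t) = (2 * (n - t) - 1) * odd_dfact (n - Suc t)"
proof -
  have "n - t = Suc (n - Suc t)"
    using t_less_q n_large by simp
  then show ?thesis
    by (simp add: odd_dfact_Suc)
qed

lemma remainder_le: "n^q * odd_dfact (n - q) \<le> odd_dfact (n - Suc t)"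
proof -
  have "n^q * odd_dfact (n - q) \<le> n^t * (n^q * odd_dfact (n - q))"
    using n_pos by simp
  then show ?thesis
    using remainder_small by (rule le_trans)
qed

lemma odd_dfact_Suc_le: "odd_dfact (n - Suc t) \<le> odd_dfact (n - t)"
proof -
  have "1 * odd_dfact (n - Suc t) \<le> (2 * (n - t) - 1) * odd_dfact (n - Suc t)"
    by (rule mult_le_mono1) (use t_less_q n_large in arith)
  then show ?thesis
    unfolding odd_dfact_n_minus_t by simp
qed

lemma kernel_cover:
  assumes F: "F \<subseteq> near_perfect_matchings n"
  obtains K where "card F \<le> n^q * odd_dfact (n - q) + card (\<Union>S\<in>K. star n S)"
    "\<And>T. \<forall>S\<in>K. T \<subseteq> S \<Longrightarrow> card (F - star n T) \<le> n^q * odd_dfact (n - q)"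
    "\<And>S. S \<in> K \<Longrightarrow> finite S \<and> card S \<le> q"
    "\<And>S. S \<in> K \<Longrightarrow> \<exists>H\<subseteq>F. spread_over n S H"
proof -
  define E where "E = edges_of {0..<2*n-1}"
  have finite_E: "finite E"
    by (simp add: E_def finite_edges_of)
  have F_E: "f \<subseteq> E" if "f \<in> F" for f
    using F that by (auto simp: E_def near_perfect_matchings_def is_matching_def)
  have q_sets: "card {f\<in>F. S \<subseteq> f} \<le> odd_dfact (n - q)" if "S \<subseteq> E" "card S = q" for S
    using card_supersets_le[OF n_pos F, of S] that(2) by simp
  obtain K R where K: "R \<subseteq> F" "card R \<le> n^q * odd_dfact (n - q)"
    "\<forall>f\<in>F - R. \<exists>S\<in>K. S \<subseteq> f"
    "\<forall>S\<in>K. finite S \<and> card S < q \<and> (\<exists>H\<subseteq>F. spread_over n S H)"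
    using spread_approximation[of E F n q "odd_dfact (n - q)", OF finite_E F_E n_pos q_sets]
    by blast
  have "R \<subseteq> near_perfect_matchings n"
    using K(1) F by (rule subset_trans)
  then have finite_R: "finite R"
    by (rule finite_subset[OF _ finite_near_perfect_matchings])
  have covered: "\<exists>S\<in>K. f \<in> star n S" if "f \<in> F - R" for f
    using K(3) that F by (auto simp: star_def)
  have "card F \<le> card R + card (F - R)"
    using card_Un_le[of R "F - R"] K(1) by (simp add: Un_absorb1)
  also have "card (F - R) \<le> card (\<Union>S\<in>K. star n S)"
    using covered
    by (intro card_mono finite_subset[OF _ finite_near_perfect_matchings]) (auto simp: star_def)
  finally have "card F \<le> n^q * odd_dfact (n - q) + card (\<Union>S\<in>K. star n S)"
    using K(2) by simp
  moreover have "card (F - star n T) \<le> n^q * odd_dfact (n - q)" if "\<forall>S\<in>K. T \<subseteq> S" for T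
  proof -
    have "F - star n T \<subseteq> R"
    proof
      fix f assume f: "f \<in> F - star n T"
      show "f \<in> R"
      proof (rule ccontr)
        assume "f \<notin> R"
        then obtain S where "S \<in> K" "f \<in> star n S"
          using covered f by blast
        then show False
          using f that star_antimono[of T S n] by blast
      qed
    qed
    then have "card (F - star n T) \<le> card R"
      by (rule card_mono[OF finite_R])
    then show ?thesis
      using K(2) by simp
  qed
  moreover have "finite S \<and> card S \<le> q" "\<exists>H\<subseteq>F. spread_over n S H" if "S \<in> K" for S
    using K(4) that by auto
  ultimately show ?thesis
    by (rule that)
qed

lemma kernels_t_cross_intersecting:
  assumes F: "F \<subseteq> near_perfect_matchings n" and cross: "t_cross_intersecting t F G"
    and K1: "\<And>S. S \<in> K1 \<Longrightarrow> \<exists>H\<subseteq>F. spread_over n S H"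
    and K2: "\<And>S. S \<in> K2 \<Longrightarrow> finite S \<and> card S \<le> q" "\<And>S. S \<in> K2 \<Longrightarrow> \<exists>H\<subseteq>G. spread_over n S H"
  shows "t_cross_intersecting t K1 K2"
  unfolding t_cross_intersecting_def
proof (intro ballI)
  fix S1 S2 assume S: "S1 \<in> K1" "S2 \<in> K2"
  then obtain H1 H2 where H: "H1 \<subseteq> F" "spread_over n S1 H1" "H2 \<subseteq> G" "spread_over n S2 H2"
    using K1 K2(2) by blast
  show "t \<le> card (S1 \<inter> S2)"
  proof (rule spread_kernels_intersect[OF H(2,4)])
    show "finite h \<and> card h < n" if "h \<in> H1" for h
      using near_perfect_matchingsD[of h n] H(1) F that n_pos by auto
    show "finite S2" "card (S2 - S1) < n"
      using K2(1)[OF S(2)] card_mono[of S2 "S2 - S1"] n_large by auto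
    show "t_cross_intersecting t H1 H2"
      using cross H(1,3) by (rule t_cross_intersecting_subset)
  qed
qed

lemma product_le_if_one_small:
  assumes F: "F \<subseteq> near_perfect_matchings n" and G: "G \<subseteq> near_perfect_matchings n"
    and cross: "t_cross_intersecting t F G" and small: "card G \<le> n^q * odd_dfact (n - q)"
  shows "card F * card G \<le> odd_dfact (n - t)^2"
proof (cases "G = {}")
  case False
  then obtain g where g: "g \<in> G" by blast
  have "card F \<le> n^t * odd_dfact (n - t)"
    using cross g G by (intro card_t_intersecting_le[OF n_pos F]) (auto simp: t_cross_intersecting_def)
  then have "card F * card G \<le> (n^t * odd_dfact (n - t)) * (n^q * odd_dfact (n - q))"
    using small by (rule mult_le_mono)
  also have "\<dots> = odd_dfact (n - t) * (n^t * (n^q * odd_dfact (n - q)))"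
    by (simp only: ac_simps)
  also have "\<dots> \<le> odd_dfact (n - t) * odd_dfact (n - t)"
    using remainder_small odd_dfact_Suc_le by simp
  finally show ?thesis
    by (simp add: power2_eq_square)
qed simp

lemma card_le_if_member_outside_star:
  assumes F: "F \<subseteq> near_perfect_matchings n" and cross: "t_cross_intersecting t F G"
    and T: "finite T" "card T = t" "\<not> F \<subseteq> star n T" and "finite G"
    and G_outside: "card (G - star n T) \<le> n^q * odd_dfact (n - q)"
  shows "card G \<le> n * odd_dfact (n - Suc t)"
proof -
  obtain f where f: "f \<in> F" "f \<notin> star n T"
    using T(3) by blast
  then have "f \<in> near_perfect_matchings n" "\<not> T \<subseteq> f"
    using F by (auto simp: star_def)
  then have "card (G \<inter> star n T) \<le> (n - 1) * odd_dfact (n - Suc t)"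
    using cross f(1) T(1,2)
    by (intro card_Int_star_le[OF n_pos]) (auto simp: t_cross_intersecting_def)
  then have "card G \<le> (n - 1) * odd_dfact (n - Suc t) + odd_dfact (n - Suc t)"
    using card_Int_Diff[OF \<open>finite G\<close>, of "star n T"] G_outside remainder_le by linarith
  also have "\<dots> = n * odd_dfact (n - Suc t)"
    using n_pos by (cases n) simp_all
  finally show ?thesis .
qed

lemma product_le_if_core_one_sided:
  assumes F: "F \<subseteq> near_perfect_matchings n" and G: "G \<subseteq> near_perfect_matchings n"
    and cross: "t_cross_intersecting t F G" and T: "finite T" "card T = t" "\<not> F \<subseteq> star n T"
    and F_outside: "card (F - star n T) \<le> n^q * odd_dfact (n - q)"
    and G_outside: "card (G - star n T) \<le> n^q * odd_dfact (n - q)"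
  shows "card F * card G \<le> odd_dfact (n - t)^2"
proof -
  define N where "N = n - t"
  define b where "b = odd_dfact (n - Suc t)"
  have a: "odd_dfact (n - t) = (2 * N - 1) * b" and N: "t + 2 \<le> N" "n = N + t"
    using odd_dfact_n_minus_t t_less_q n_large by (auto simp: N_def b_def)
  have finite: "finite F" "finite G"
    using F G finite_near_perfect_matchings finite_subset by blast+
  have "card G \<le> n * b"
    unfolding b_def by (rule card_le_if_member_outside_star[OF F cross T finite(2) G_outside])
  moreover have "card F \<le> 2 * N * b"
  proof -
    have "card (F \<inter> star n T) \<le> card (star n T)"
      by (rule card_mono[OF finite_star]) blast
    also have "\<dots> \<le> (2 * N - 1) * b"
      using card_star_le[OF n_pos, of T] T(2) a by simp
    finally have "card F \<le> (2 * N - 1) * b + b"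
      using card_Int_Diff[OF finite(1), of "star n T"] F_outside remainder_le
      unfolding b_def by linarith
    also have "\<dots> = 2 * N * b"
      using N(1) by (cases N) simp_all
    finally show ?thesis .
  qed
  ultimately have "card F * card G \<le> (2 * N * b) * (n * b)"
    by (intro mult_le_mono)
  also have "\<dots> = (2 * N * (N + t)) * (b * b)"
    unfolding N(2) by (simp only: ac_simps)
  also have "\<dots> \<le> (2 * N - 1)^2 * (b * b)"
    using double_mult_le_square[OF N(1)] by simp
  finally show ?thesis
    using a by (simp add: power2_eq_square algebra_simps)
qed

lemma product_le_if_core:
  assumes F: "F \<subseteq> near_perfect_matchings n" and G: "G \<subseteq> near_perfect_matchings n"
    and cross: "t_cross_intersecting t F G" and T: "finite T" "card T = t"
    and F_outside: "card (F - star n T) \<le> n^q * odd_dfact (n - q)"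
    and G_outside: "card (G - star n T) \<le> n^q * odd_dfact (n - q)"
  shows "card F * card G \<le> odd_dfact (n - t)^2"
proof (cases "F \<subseteq> star n T \<and> G \<subseteq> star n T")
  case True
  then have "card F \<le> card (star n T)" "card G \<le> card (star n T)"
    by (auto intro: card_mono[OF finite_star])
  moreover have "card (star n T) \<le> odd_dfact (n - t)"
    using card_star_le[OF n_pos, of T] T(2) by simp
  ultimately show ?thesis
    by (simp add: power2_eq_square mult_le_mono)
next
  case False
  then consider "\<not> F \<subseteq> star n T" | "\<not> G \<subseteq> star n T"
    by blast
  then show ?thesis
  proof cases
    case 1
    then show ?thesis
      by (rule product_le_if_core_one_sided[OF F G cross T _ F_outside G_outside])
  next
    case 2
    then have "card G * card F \<le> odd_dfact (n - t)^2"
      using product_le_if_core_one_sided[OF G F _ T] cross F_outside G_outside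
      by (simp add: t_cross_intersecting_commute)
    then show ?thesis
      by (simp add: mult.commute)
  qed
qed

lemma card_Union_stars_blocked_le:
  assumes K: "\<And>S. S \<in> K \<Longrightarrow> finite S" and K': "\<And>S. S \<in> K' \<Longrightarrow> finite S \<and> card S \<le> q"
    and cross: "t_cross_intersecting t K K'" and X: "card X \<le> m"
    and blocked: "\<And>Y S. X \<subseteq> Y \<Longrightarrow> card Y < m \<Longrightarrow> S \<in> K \<Longrightarrow> Y \<subseteq> S \<Longrightarrow> \<exists>S'\<in>K'. card (Y \<inter> S') < t"
  shows "card (\<Union>S\<in>{S\<in>K. X \<subseteq> S}. star n S) \<le> q^(m - card X) * odd_dfact (n - m)"
  using card_Union_above_le[where st = "star n" and a = "\<lambda>d. odd_dfact (n - d)",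
      OF star_antimono finite_star card_star_le[OF n_pos] K K' cross blocked X] .

lemma card_Union_stars_le_cross_intersecting:
  assumes K: "\<And>S. S \<in> K \<Longrightarrow> finite S" and K': "\<And>S. S \<in> K' \<Longrightarrow> finite S \<and> card S \<le> q"
    and cross: "t_cross_intersecting t K K'" and "K' \<noteq> {}"
  shows "card (\<Union>S\<in>K. star n S) \<le> q^t * odd_dfact (n - t)"
proof -
  obtain S' where "S' \<in> K'"
    using \<open>K' \<noteq> {}\<close> by blast
  have "\<exists>S'\<in>K'. card (Y \<inter> S') < t" if "card Y < t" "S \<in> K" "Y \<subseteq> S" for Y S
  proof -
    have "card (Y \<inter> S') \<le> card Y"
      using K[OF that(2)] that(3) finite_subset by (intro card_mono) auto
    then show ?thesis
      using \<open>S' \<in> K'\<close> that(1) by (meson le_less_trans)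
  qed
  then show ?thesis
    using card_Union_stars_blocked_le[OF K K' cross, of "{}" t] by simp
qed

lemma card_Union_stars_le_without_core:
  assumes K: "\<And>S. S \<in> K \<Longrightarrow> finite S" and K': "\<And>S. S \<in> K' \<Longrightarrow> finite S \<and> card S \<le> q"
    and cross: "t_cross_intersecting t K K'" and "K' \<noteq> {}"
    and no_core: "\<And>T. card T = t \<Longrightarrow> \<exists>S'\<in>K'. \<not> T \<subseteq> S'"
  shows "card (\<Union>S\<in>K. star n S) \<le> q^(t+1) * odd_dfact (n - Suc t)"
proof -
  obtain S0 where "S0 \<in> K'"
    using \<open>K' \<noteq> {}\<close> by blast
  have "\<exists>S'\<in>K'. card (Y \<inter> S') < t" if "card Y < Suc t" "S \<in> K" "Y \<subseteq> S" for Y S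
  proof (rule ccontr)
    assume "\<not> ?thesis"
    then have meets: "t \<le> card (Y \<inter> S')" if "S' \<in> K'" for S'
      using that by auto
    have Y: "finite Y"
      using K[OF that(2)] that(3) finite_subset by blast
    have "t \<le> card Y"
      using meets[OF \<open>S0 \<in> K'\<close>] card_mono[OF Y, of "Y \<inter> S0"] by simp
    then have "card Y = t"
      using that(1) by simp
    moreover have "Y \<subseteq> S'" if "S' \<in> K'" for S'
    proof -
      have "card Y \<le> card (Y \<inter> S')"
        using meets[OF that] \<open>card Y = t\<close> by simp
      then have "Y \<inter> S' = Y"
        using Y by (intro card_seteq) auto
      then show ?thesis by blast
    qed
    ultimately show False
      using no_core by blast
  qed
  then show ?thesis
    using card_Union_stars_blocked_le[OF K K' cross, of "{}" "Suc t"] by simp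
qed

lemma card_Union_stars_le_with_core:
  assumes K: "\<And>S. S \<in> K \<Longrightarrow> finite S" and K': "\<And>S. S \<in> K' \<Longrightarrow> finite S \<and> card S \<le> q"
    and cross: "t_cross_intersecting t K K'"
    and T: "finite T" "card T = t" "\<forall>S\<in>K. T \<subseteq> S" and S': "S' \<in> K'" "\<not> T \<subseteq> S'"
  shows "card (\<Union>S\<in>K. star n S) \<le> q * odd_dfact (n - Suc t)"
proof -
  have "\<exists>S'\<in>K'. card (Y \<inter> S') < t" if "T \<subseteq> Y" "card Y < Suc t" "S \<in> K" "Y \<subseteq> S" for Y S
  proof -
    have "finite Y"
      using K[OF that(3)] that(4) finite_subset by blast
    then have "card T = card Y"
      using card_mono[of Y T] that(1,2) T(2) by simp
    then have "Y = T"
      using card_subset_eq[OF \<open>finite Y\<close> that(1)] by simp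
    moreover have "card (T \<inter> S') < card T"
      using S'(2) T(1) by (intro psubset_card_mono) auto
    ultimately show ?thesis
      using S'(1) T(2) by blast
  qed
  moreover have "{S\<in>K. T \<subseteq> S} = K"
    using T(3) by blast
  ultimately show ?thesis
    using card_Union_stars_blocked_le[OF K K' cross, of T "Suc t"] T(2) by simp
qed

lemma product_le_of_branching_bounds:
  assumes x: "x \<le> n^q * odd_dfact (n - q) + q^(t+1) * odd_dfact (n - Suc t)"
    and y: "y \<le> n^q * odd_dfact (n - q) + q^t * odd_dfact (n - t)"
  shows "x * y \<le> odd_dfact (n - t)^2"
proof -
  define a where "a = odd_dfact (n - t)"
  define b where "b = odd_dfact (n - Suc t)"
  have "x \<le> (q^(t+1) + 1) * b"
    using x remainder_le by (simp add: b_def)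
  moreover have "y \<le> (q^t + 1) * a"
    using y remainder_le odd_dfact_Suc_le by (simp add: a_def)
  ultimately have "x * y \<le> ((q^(t+1) + 1) * b) * ((q^t + 1) * a)"
    by (rule mult_le_mono)
  also have "\<dots> = ((q^(t+1) + 1) * (q^t + 1) * b) * a"
    by (simp only: ac_simps)
  also have "(q^(t+1) + 1) * (q^t + 1) * b \<le> a"
    unfolding a_def b_def odd_dfact_n_minus_t using branching_small by (rule mult_le_mono1)
  finally show ?thesis
    by (simp add: a_def power2_eq_square)
qed

lemma product_le_if_no_core:
  assumes K1: "\<And>S. S \<in> K1 \<Longrightarrow> finite S \<and> card S \<le> q"
    and K2: "\<And>S. S \<in> K2 \<Longrightarrow> finite S \<and> card S \<le> q"
    and cross: "t_cross_intersecting t K1 K2" and "K1 \<noteq> {}" "K2 \<noteq> {}"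
    and no_core: "\<And>T. card T = t \<Longrightarrow> \<forall>S\<in>K1. T \<subseteq> S \<Longrightarrow> \<forall>S\<in>K2. T \<subseteq> S \<Longrightarrow> False"
    and F: "card F \<le> n^q * odd_dfact (n - q) + card (\<Union>S\<in>K1. star n S)"
    and G: "card G \<le> n^q * odd_dfact (n - q) + card (\<Union>S\<in>K2. star n S)"
  shows "card F * card G \<le> odd_dfact (n - t)^2"
proof -
  have K1_finite: "\<And>S. S \<in> K1 \<Longrightarrow> finite S" and K2_finite: "\<And>S. S \<in> K2 \<Longrightarrow> finite S"
    using K1 K2 by blast+
  have cross': "t_cross_intersecting t K2 K1"
    using cross by (simp add: t_cross_intersecting_commute)
  show ?thesis
  proof (cases "\<exists>T. card T = t \<and> (\<forall>S\<in>K2. T \<subseteq> S)")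
    case True
    then obtain T where T: "card T = t" "\<forall>S\<in>K2. T \<subseteq> S"
      by blast
    have "finite T"
      using T(2) \<open>K2 \<noteq> {}\<close> K2_finite finite_subset by blast
    obtain S' where S': "S' \<in> K1" "\<not> T \<subseteq> S'"
      using no_core[OF T(1)] T(2) by blast
    have "card (\<Union>S\<in>K2. star n S) \<le> q * odd_dfact (n - Suc t)"
      by (rule card_Union_stars_le_with_core[OF K2_finite K1 cross' \<open>finite T\<close> T S'])
    also have "\<dots> \<le> q^(t+1) * odd_dfact (n - Suc t)"
      using t_less_q by (simp add: self_le_power)
    finally have "card G * card F \<le> odd_dfact (n - t)^2"
      using F G card_Union_stars_le_cross_intersecting[OF K1_finite K2 cross \<open>K2 \<noteq> {}\<close>]
      by (intro product_le_of_branching_bounds) linarith+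
    then show ?thesis
      by (simp add: mult.commute)
  next
    case False
    then have no_core2: "\<exists>S'\<in>K2. \<not> T \<subseteq> S'" if "card T = t" for T :: "nat set set"
      using that by auto
    have "card (\<Union>S\<in>K1. star n S) \<le> q^(t+1) * odd_dfact (n - Suc t)"
      using card_Union_stars_le_without_core[OF K1_finite K2 cross \<open>K2 \<noteq> {}\<close> no_core2] .
    then show ?thesis
      using F G card_Union_stars_le_cross_intersecting[OF K2_finite K1 cross' \<open>K1 \<noteq> {}\<close>]
      by (intro product_le_of_branching_bounds) linarith+
  qed
qed

theorem card_product_le:
  assumes F: "F \<subseteq> near_perfect_matchings n" and G: "G \<subseteq> near_perfect_matchings n"
    and cross: "t_cross_intersecting t F G"
  shows "card F * card G \<le> odd_dfact (n - t)^2"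
proof -
  obtain K1 where K1: "card F \<le> n^q * odd_dfact (n - q) + card (\<Union>S\<in>K1. star n S)"
    "\<And>T. \<forall>S\<in>K1. T \<subseteq> S \<Longrightarrow> card (F - star n T) \<le> n^q * odd_dfact (n - q)"
    "\<And>S. S \<in> K1 \<Longrightarrow> finite S \<and> card S \<le> q" "\<And>S. S \<in> K1 \<Longrightarrow> \<exists>H\<subseteq>F. spread_over n S H"
    using kernel_cover[OF F] by blast
  obtain K2 where K2: "card G \<le> n^q * odd_dfact (n - q) + card (\<Union>S\<in>K2. star n S)"
    "\<And>T. \<forall>S\<in>K2. T \<subseteq> S \<Longrightarrow> card (G - star n T) \<le> n^q * odd_dfact (n - q)"
    "\<And>S. S \<in> K2 \<Longrightarrow> finite S \<and> card S \<le> q" "\<And>S. S \<in> K2 \<Longrightarrow> \<exists>H\<subseteq>G. spread_over n S H"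
    using kernel_cover[OF G] by blast
  consider "K1 = {}" | "K2 = {}"
    | (core) T where "card T = t" "\<forall>S\<in>K1. T \<subseteq> S" "\<forall>S\<in>K2. T \<subseteq> S" "K1 \<noteq> {}"
    | (no_core) "K1 \<noteq> {}" "K2 \<noteq> {}"
        "\<And>T. card T = t \<Longrightarrow> \<forall>S\<in>K1. T \<subseteq> S \<Longrightarrow> \<forall>S\<in>K2. T \<subseteq> S \<Longrightarrow> False"
    by blast
  then show ?thesis
  proof cases
    case 1
    then have "card G * card F \<le> odd_dfact (n - t)^2"
      using K1(1) cross by (intro product_le_if_one_small[OF G F]) (simp_all add: t_cross_intersecting_commute)
    then show ?thesis
      by (simp add: mult.commute)
  next
    case 2
    then show ?thesis
      using K2(1) by (intro product_le_if_one_small[OF F G cross]) simp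
  next
    case core
    have "finite T"
      using core(2,4) K1(3) finite_subset by blast
    then show ?thesis
      using core(1) K1(2)[OF core(2)] K2(2)[OF core(3)] by (rule product_le_if_core[OF F G cross])
  next
    case no_core
    have "t_cross_intersecting t K1 K2"
      by (rule kernels_t_cross_intersecting[OF F cross K1(4) K2(3,4)])
    with no_core show ?thesis
      by (intro product_le_if_no_core[OF K1(3) K2(3) _ _ _ _ K1(1) K2(1)])
  qed
qed

end

section \<open>Choosing the kernel size\<close>

lemma odd_dfact_step:
  assumes "4 * d + 2 \<le> n"
  shows "3 * n * odd_dfact (n - Suc d) \<le> 2 * odd_dfact (n - d)"
proof -
  have "n - d = Suc (n - Suc d)"
    using assms by simp
  then have eq: "2 * odd_dfact (n - d) = (2 * (2 * (n - Suc d) + 1)) * odd_dfact (n - Suc d)"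
    by (simp add: odd_dfact_Suc)
  have "3 * n \<le> 2 * (2 * (n - Suc d) + 1)"
    using assms by simp
  then have "3 * n * odd_dfact (n - Suc d) \<le> (2 * (2 * (n - Suc d) + 1)) * odd_dfact (n - Suc d)"
    by (rule mult_right_mono) simp
  also have "\<dots> = 2 * odd_dfact (n - d)"
    by (rule eq[symmetric])
  finally show ?thesis .
qed

lemma odd_dfact_descent:
  "4 * (s + j) + 2 \<le> n \<Longrightarrow> (3 * n)^j * odd_dfact (n - (s + j)) \<le> 2^j * odd_dfact (n - s)"
proof (induction j)
  case (Suc j)
  have "(3 * n)^Suc j * odd_dfact (n - (s + Suc j))
          = (3 * n)^j * (3 * n * odd_dfact (n - Suc (s + j)))"
    by (simp add: ac_simps)
  also have "\<dots> \<le> (3 * n)^j * (2 * odd_dfact (n - (s + j)))"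
    using odd_dfact_step[of "s + j" n] Suc.prems by simp
  also have "\<dots> \<le> 2 * (2^j * odd_dfact (n - s))"
    using Suc by simp
  finally show ?case
    by simp
qed simp

lemma pow_mult_two_pow_le_three_pow:
  fixes n D j :: nat
  assumes "0 < n" and "real D * ln (real n) \<le> real j * ln (3/2)"
  shows "n^D * 2^j \<le> 3^j"
proof -
  have "real n ^ D = exp (real D * ln (real n))"
    using assms(1) by (simp add: exp_of_nat_mult)
  also have "\<dots> \<le> exp (real j * ln (3/2))"
    using assms(2) by simp
  also have "\<dots> = (3/2)^j"
    by (simp add: exp_of_nat_mult)
  finally have "real n ^ D * 2^j \<le> (3/2)^j * 2^j"
    by simp
  also have "\<dots> = 3^j"
    by (simp add: power_mult_distrib[symmetric])
  finally have "real (n^D * 2^j) \<le> real (3^j :: nat)"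
    by simp
  then show ?thesis
    by (simp only: of_nat_le_iff)
qed

lemma remainder_le_if_three_halves_pow:
  assumes n: "4 * q + 2 \<le> n" and q: "q = t + 1 + j" and pow: "n^(2*t+1) * 2^j \<le> 3^j"
  shows "n^t * (n^q * odd_dfact (n - q)) \<le> odd_dfact (n - Suc t)"
proof -
  have "t + q = (2*t+1) + j"
    using q by simp
  then have pw: "n^t * n^q = n^(2*t+1) * n^j"
    by (metis power_add)
  have "3^j * (n^t * (n^q * odd_dfact (n - q))) = (n^t * n^q) * (3^j * odd_dfact (n - q))"
    by (simp only: ac_simps)
  also have "\<dots> = n^(2*t+1) * ((3 * n)^j * odd_dfact (n - (Suc t + j)))"
    unfolding pw by (simp add: q power_mult_distrib ac_simps)
  also have "\<dots> \<le> n^(2*t+1) * (2^j * odd_dfact (n - Suc t))"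
    using odd_dfact_descent[of "Suc t" j n] n q by simp
  also have "\<dots> \<le> 3^j * odd_dfact (n - Suc t)"
    using pow by (simp add: mult.assoc[symmetric] mult_right_mono)
  finally show ?thesis
    by simp
qed

lemma branching_factors_le:
  fixes q n t :: nat
  assumes "1 \<le> q" and "4 * q^(2*t+1) + 2 * t + 1 \<le> 2 * n"
  shows "(q^(t+1) + 1) * (q^t + 1) \<le> 2 * (n - t) - 1"
proof -
  have "q^(t+1) + 1 \<le> 2 * q^(t+1)" "q^t + 1 \<le> 2 * q^t"
    using assms(1) by simp_all
  then have "(q^(t+1) + 1) * (q^t + 1) \<le> (2 * q^(t+1)) * (2 * q^t)"
    by (rule mult_le_mono)
  also have "\<dots> = 4 * (q^(t+1) * q^t)"
    by simp
  also have "q^(t+1) * q^t = q^(2*t+1)"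
    by (metis power_add mult_2 add.commute add.left_commute)
  finally show ?thesis
    using assms(2) by linarith
qed

lemma admissible_kernel_sizeI:
  assumes n: "1 \<le> n" "4 * q + 2 \<le> n" "4 * q^(2*t+1) + 2 * t + 1 \<le> 2 * n"
    and q: "q = t + 1 + j" and j: "real (2*t+1) * ln (real n) \<le> real j * ln (3/2)"
  shows "admissible_kernel_size n q t"
proof
  show "t < q" "4 * q + 2 \<le> n"
    using q n(2) by simp_all
  have "n^(2*t+1) * 2^j \<le> 3^j"
    using n(1) j by (intro pow_mult_two_pow_le_three_pow) simp_all
  then show "n^t * (n^q * odd_dfact (n - q)) \<le> odd_dfact (n - Suc t)"
    using n(2) q by (rule remainder_le_if_three_halves_pow[rotated 2])
  show "(q^(t+1) + 1) * (q^t + 1) \<le> 2 * (n - t) - 1"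
    using q n(3) by (intro branching_factors_le) simp_all
qed

(* q = t + 1 + j with j = ceiling ((2t+1) log_(3/2) n): each of the j factors separating
   (2(n-q)-1)!! from (2(n-t)-3)!! is at least 3n/2, which pays for n^(t+q). *)
lemma eventually_admissible_kernel_size:
  "eventually (\<lambda>n. \<exists>q. admissible_kernel_size n q t) sequentially"
proof -
  define D where "D = 2 * t + 1"
  define c where "c = real D / ln (3/2)"
  have "0 < c"
    by (simp add: c_def D_def)
  then have "eventually (\<lambda>n::nat. 4 * (real t + 2 + c * ln (real n)) + 2 \<le> real n) sequentially"
    "eventually (\<lambda>n::nat. 4 * (real t + 2 + c * ln (real n))^D + 2 * real t + 1 \<le> 2 * real n) sequentially"
    by real_asymp+
  moreover have "eventually (\<lambda>n::nat. 1 \<le> n) sequentially"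
    by (rule eventually_ge_at_top)
  ultimately show ?thesis
  proof eventually_elim
    case (elim n)
    define j where "j = nat \<lceil>c * ln (real n)\<rceil>"
    have "0 \<le> c * ln (real n)"
      using \<open>0 < c\<close> elim(3) by simp
    then have j: "c * ln (real n) \<le> real j" "real j \<le> c * ln (real n) + 1"
      unfolding j_def by linarith+
    then have q: "real (t + 1 + j) \<le> real t + 2 + c * ln (real n)"
      by simp
    have "real (4 * (t + 1 + j) + 2) \<le> real n"
      using q elim(1) by simp
    then have n_large: "4 * (t + 1 + j) + 2 \<le> n"
      by (simp only: of_nat_le_iff)
    have "real ((t + 1 + j)^D) \<le> (real t + 2 + c * ln (real n))^D"
      using q by (simp add: power_mono)
    then have "real (4 * (t + 1 + j)^(2*t+1) + 2 * t + 1) \<le> real (2 * n)"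
      using elim(2) unfolding D_def by simp
    then have branching: "4 * (t + 1 + j)^(2*t+1) + 2 * t + 1 \<le> 2 * n"
      by (simp only: of_nat_le_iff)
    have "real (2*t+1) * ln (real n) \<le> real j * ln (3/2)"
      using j(1) by (simp add: c_def D_def field_simps)
    then have "admissible_kernel_size n (t + 1 + j) t"
      by (rule admissible_kernel_sizeI[OF elim(3) n_large branching refl])
    then show ?case ..
  qed
qed

theorem mainTheorem11:
  fixes t :: nat
  shows "\<exists>n0. \<forall>n \<ge> n0. \<forall>F G.
           F \<subseteq> near_perfect_matchings n \<longrightarrow> G \<subseteq> near_perfect_matchings n \<longrightarrow>
           t_cross_intersecting t F G \<longrightarrow>
           card F * card G \<le> (odd_dfact (n - t))^2"
proof -
  obtain n0 where "\<And>n. n \<ge> n0 \<Longrightarrow> \<exists>q. admissible_kernel_size n q t"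
    using eventually_admissible_kernel_size[of t] by (auto simp: eventually_sequentially)
  then show ?thesis
    using admissible_kernel_size.card_product_le by blast
qed

end
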